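(* Let $K,m,n$ be integers with $n\ge1$ and $0\le m$, $2m+2\le K$, and let $a_j^2=\frac{j(K-j+1)}{4n^2}$. Define $r_1^2,r_3^2,\dots$ by $r_{2\ell+1}^2=a_{2\ell+2}^2+a_{2\ell+1}^2\prod_{j=1}^{\ell}\frac{a_{2j-1}^2}{r_{2j-1}^2}$ for $\ell\ge0$. For $k\ge 0$ set $$A_k^{[2m+1]}=-\frac{a_{2m+1-2(k-1)}^2}{a_{2m+2-2(k-1)}^2},\qquad B_k^{[2m+1]}=1+\frac{a_{2m+1-2k}^2}{a_{2m+2-2k}^2}=1-A_{k+1}^{[2m+1]},$$ and define $\mathcal R_k^{[2m+1]},\mathcal S_k^{[2m+1]}$ by $\mathcal R_{-1}^{[2m+1]}=1$, $\mathcal S_{-1}^{[2m+1]}=0$, $\mathcal R_0^{[2m+1]}=B_0^{[2m+1]}$, $\mathcal S_0^{[2m+1]}=1$ and, for $k\ge1$, $$\mathcal R_k^{[2m+1]}=B_k^{[2m+1]}\mathcal R_{k-1}^{[2m+1]}+A_k^{[2m+1]}\mathcal R_{k-2}^{[2m+1]},\qquad \mathcal S_k^{[2m+1]}=B_k^{[2m+1]}\mathcal S_{k-1}^{[2m+1]}+A_k^{[2m+1]}\mathcal S_{k-2}^{[2m+1]}.$$ Then $$\frac{r_{2m+1}^2}{a_{2m+2}^2}=\frac{\mathcal R_m^{[2m+1]}}{\mathcal S_m^{[2m+1]}}.$$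
   Context: The $a_j$ are the (off-diagonal) Jacobi recurrence coefficients of the orthonormal Krawtchouk polynomials with parameter $p=1/2$ on the lattice $\{i/n: i=-K/2,\dots,K/2\}$, i.e. $a_j^2=j(K-j+1)p(1-p)/n^2$ with $p=1/2$. *)

theory Defs
  imports Complex_Main
begin

definition asq :: "nat \<Rightarrow> nat \<Rightarrow> nat \<Rightarrow> real" where
  "asq K n j = real j * (real K - real j + 1) / (4 * (real n)^2)"

text \<open>rlist K n l = [r_1^2, r_3^2, ..., r_{2l+1}^2]; entry i is r_{2i+1}^2, with
  r_{2l+1}^2 = a_{2l+2}^2 + a_{2l+1}^2 * prod_{j=1}^{l} a_{2j-1}^2 / r_{2j-1}^2.\<close>
fun rlist :: "nat \<Rightarrow> nat \<Rightarrow> nat \<Rightarrow> real list" where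
  "rlist K n 0 = [asq K n 2 + asq K n 1]"
| "rlist K n (Suc l) = rlist K n l @
     [asq K n (2 * Suc l + 2) + asq K n (2 * Suc l + 1) *
        (\<Prod>j\<in>{1..Suc l}. asq K n (2 * j - 1) / (rlist K n l ! (j - 1)))]"

definition rsq :: "nat \<Rightarrow> nat \<Rightarrow> nat \<Rightarrow> real" where
  "rsq K n l = rlist K n l ! l"

text \<open>A_k^{[2m+1]} = - a_{2m+1-2(k-1)}^2 / a_{2m+2-2(k-1)}^2\<close>
definition Acoef :: "nat \<Rightarrow> nat \<Rightarrow> nat \<Rightarrow> nat \<Rightarrow> real" where
  "Acoef K n m k = - asq K n (2 * m + 3 - 2 * k) / asq K n (2 * m + 4 - 2 * k)"

definition Bcoef :: "nat \<Rightarrow> nat \<Rightarrow> nat \<Rightarrow> nat \<Rightarrow> real" where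
  "Bcoef K n m k = 1 + asq K n (2 * m + 1 - 2 * k) / asq K n (2 * m + 2 - 2 * k)"

text \<open>Three-term recurrence: value at index k (k >= 0) given X_{-1} = x, X_0 = y,
  X_k = B_k X_{k-1} + A_k X_{k-2} for k >= 1.\<close>
fun rec3 :: "(nat \<Rightarrow> real) \<Rightarrow> (nat \<Rightarrow> real) \<Rightarrow> real \<Rightarrow> real \<Rightarrow> nat \<Rightarrow> real" where
  "rec3 A B x y 0 = y"
| "rec3 A B x y (Suc 0) = B 1 * y + A 1 * x"
| "rec3 A B x y (Suc (Suc k)) =
     B (Suc (Suc k)) * rec3 A B x y (Suc k) + A (Suc (Suc k)) * rec3 A B x y k"

definition Rcal :: "nat \<Rightarrow> nat \<Rightarrow> nat \<Rightarrow> nat \<Rightarrow> real" where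
  "Rcal K n m k = rec3 (Acoef K n m) (Bcoef K n m) 1 (Bcoef K n m 0) k"

definition Scal :: "nat \<Rightarrow> nat \<Rightarrow> nat \<Rightarrow> nat \<Rightarrow> real" where
  "Scal K n m k = rec3 (Acoef K n m) (Bcoef K n m) 0 1 k"

end

theory Submission
  imports Defs
begin

text \<open>Put x_l = r_{2l+1}^2 / a_{2l+2}^2 and c_l = a_{2l+1}^2 / a_{2l+2}^2. The product
  in the definition of r_{2l+3}^2 telescopes to 1 - 1/x_l, so x_0 = 1 + c_0 and
  x_{l+1} = 1 + c_{l+1} - c_{l+1}/x_l. Unrolling this from l = m down to l = 0 writes x_m as the
  finite continued fraction B_0 + A_1/(B_1 + A_2/(... + A_m/B_m)), whose value is R_m/S_m by
  the Wallis-Euler recurrences for the numerators and denominators of its convergents. Since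
  a_j^2 > 0 for 1 <= j <= K, all r^2 involved are positive and no division by zero occurs.\<close>

fun rec3_from_minus_one :: "(nat \<Rightarrow> real) \<Rightarrow> (nat \<Rightarrow> real) \<Rightarrow> real \<Rightarrow> real \<Rightarrow> nat \<Rightarrow> real" where
  "rec3_from_minus_one A B x y 0 = x"
| "rec3_from_minus_one A B x y (Suc k) = rec3 A B x y k"

lemma rec3_from_minus_one_Suc_Suc:
  "rec3_from_minus_one A B x y (Suc (Suc k)) =
     B (Suc k) * rec3_from_minus_one A B x y (Suc k) + A (Suc k) * rec3_from_minus_one A B x y k"
  by (cases k) auto

text \<open>The y_j are the tails of the continued fraction; when j increases,
  y_{j+1} F_{j+1} + A_{j+1} F_j gets multiplied by y_{j+2}.\<close>
lemma continued_fraction_tail_invariant: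
  fixes F A B y :: "nat \<Rightarrow> 'a::field"
  assumes rec: "\<And>i. F (Suc (Suc i)) = B (Suc i) * F (Suc i) + A (Suc i) * F i"
    and tail: "\<And>j. j < m \<Longrightarrow> y j = B j + A (Suc j) / y (Suc j)"
    and nonzero: "\<And>j. j \<le> m \<Longrightarrow> y j \<noteq> 0"
    and "j < m"
  shows "y (Suc j) * F (Suc j) + A (Suc j) * F j
     = (\<Prod>i\<in>{2..Suc j}. y i) * (y 1 * F 1 + A 1 * F 0)"
  using \<open>j < m\<close>
proof (induction j)
  case 0
  then show ?case by simp
next
  case (Suc j)
  have "y (Suc j) * F (Suc j) + A (Suc j) * F j
      = F (Suc (Suc j)) + A (Suc (Suc j)) * F (Suc j) / y (Suc (Suc j))"
    using tail[of "Suc j"] Suc.prems rec[of j] by (simp add: algebra_simps add_divide_distrib)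
  then have "y (Suc (Suc j)) * F (Suc (Suc j)) + A (Suc (Suc j)) * F (Suc j)
      = y (Suc (Suc j)) * (y (Suc j) * F (Suc j) + A (Suc j) * F j)"
    using nonzero[of "Suc (Suc j)"] Suc.prems by (simp add: field_simps)
  then show ?case
    using Suc by simp
qed

lemma continued_fraction_eq_rec3_quotient:
  fixes A B y :: "nat \<Rightarrow> real"
  assumes tail: "\<And>j. j < m \<Longrightarrow> y j = B j + A (Suc j) / y (Suc j)"
    and nonzero: "\<And>j. j \<le> m \<Longrightarrow> y j \<noteq> 0"
    and innermost: "y m = B m"
  shows "y 0 = rec3 A B 1 (B 0) m / rec3 A B 0 1 m"
proof (cases m)
  case 0
  then show ?thesis using innermost by simp
next
  case (Suc m')
  let ?F = "rec3_from_minus_one A B"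
  have rec3_eq: "rec3 A B x z m = (\<Prod>i\<in>{2..m}. y i) * (y 1 * z + A 1 * x)" for x z
  proof -
    have "rec3 A B x z m = y m * ?F x z m + A m * ?F x z m'"
      using rec3_from_minus_one_Suc_Suc[of A B x z m'] innermost Suc by simp
    also have "\<dots> = (\<Prod>i\<in>{2..m}. y i) * (y 1 * ?F x z 1 + A 1 * ?F x z 0)"
      using continued_fraction_tail_invariant[of "?F x z" B A m y m', OF
          rec3_from_minus_one_Suc_Suc tail nonzero] Suc by simp
    finally show ?thesis by simp
  qed
  have "y 1 \<noteq> 0" "(\<Prod>i\<in>{2..m}. y i) \<noteq> 0"
    using nonzero Suc by auto
  moreover have "y 1 * B 0 + A 1 = y 1 * y 0"
    using tail[of 0] Suc \<open>y 1 \<noteq> 0\<close> by (simp add: field_simps)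
  ultimately show ?thesis
    unfolding rec3_eq by simp
qed

lemma length_rlist: "length (rlist K n l) = Suc l"
  by (induction l) auto

lemma rlist_nth: "i \<le> l \<Longrightarrow> rlist K n l ! i = rsq K n i"
proof (induction l)
  case 0
  then show ?case by (simp add: rsq_def)
next
  case (Suc l)
  then show ?case
    by (cases "i = Suc l") (auto simp: rsq_def nth_append length_rlist)
qed

definition rsq_weight :: "nat \<Rightarrow> nat \<Rightarrow> nat \<Rightarrow> real" where
  "rsq_weight K n l = (\<Prod>j\<in>{1..l}. asq K n (2 * j - 1) / rsq K n (j - 1))"

lemma rsq_weight_Suc:
  "rsq_weight K n (Suc l) = rsq_weight K n l * (asq K n (2 * l + 1) / rsq K n l)"
  unfolding rsq_weight_def by simp

lemma rsq_eq: "rsq K n l = asq K n (2 * l + 2) + asq K n (2 * l + 1) * rsq_weight K n l"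
proof (cases l)
  case 0
  then show ?thesis by (simp add: rsq_def rsq_weight_def numeral_2_eq_2)
next
  case (Suc l')
  have "(\<Prod>j\<in>{1..Suc l'}. asq K n (2 * j - 1) / (rlist K n l' ! (j - 1)))
      = rsq_weight K n (Suc l')"
    unfolding rsq_weight_def by (intro prod.cong) (auto simp: rlist_nth)
  then show ?thesis
    using Suc by (simp add: rsq_def nth_append length_rlist)
qed

lemma rsq_weight_Suc_telescope:
  assumes "rsq K n l \<noteq> 0"
  shows "rsq_weight K n (Suc l) = 1 - asq K n (2 * l + 2) / rsq K n l"
proof -
  have "asq K n (2 * l + 1) * rsq_weight K n l = rsq K n l - asq K n (2 * l + 2)"
    using rsq_eq[of K n l] by simp
  then show ?thesis
    using assms by (simp add: rsq_weight_Suc field_simps)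
qed

lemma asq_pos: "1 \<le> n \<Longrightarrow> 1 \<le> j \<Longrightarrow> j \<le> K \<Longrightarrow> asq K n j > 0"
  unfolding asq_def by (auto intro!: divide_pos_pos mult_pos_pos)

lemma rsq_weight_pos_and_rsq_pos:
  "1 \<le> n \<Longrightarrow> 2 * l + 2 \<le> K \<Longrightarrow> rsq_weight K n l > 0 \<and> rsq K n l > 0"
proof (induction l)
  case 0
  then show ?case
    using asq_pos[of n 1 K] asq_pos[of n 2 K]
    by (simp add: rsq_weight_def rsq_eq[of K n 0] numeral_2_eq_2)
next
  case (Suc l)
  then have "rsq_weight K n (Suc l) > 0"
    using asq_pos[of n "2 * l + 1" K] by (simp add: rsq_weight_Suc)
  moreover have "rsq K n (Suc l) > 0"
    using calculation asq_pos[of n "2 * Suc l + 1" K] asq_pos[of n "2 * Suc l + 2" K] Suc.prems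
    by (simp only: rsq_eq) (simp add: add_pos_pos)
  ultimately show ?case by simp
qed

lemma rsq_pos: "1 \<le> n \<Longrightarrow> 2 * l + 2 \<le> K \<Longrightarrow> rsq K n l > 0"
  using rsq_weight_pos_and_rsq_pos by blast

definition rratio :: "nat \<Rightarrow> nat \<Rightarrow> nat \<Rightarrow> real" where
  "rratio K n l = rsq K n l / asq K n (2 * l + 2)"

lemma rratio_0: "1 \<le> n \<Longrightarrow> 2 \<le> K \<Longrightarrow> rratio K n 0 = 1 + asq K n 1 / asq K n 2"
  using asq_pos[of n 2 K]
  by (simp add: rratio_def rsq_eq[of K n 0] rsq_weight_def field_simps numeral_2_eq_2)

lemma rratio_Suc:
  assumes "1 \<le> n" "2 * Suc l + 2 \<le> K"
  defines "c \<equiv> asq K n (2 * Suc l + 1) / asq K n (2 * Suc l + 2)"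
  shows "rratio K n (Suc l) = 1 + c - c / rratio K n l"
proof -
  have "rsq K n l > 0" "asq K n (2 * Suc l + 2) > 0" "asq K n (2 * l + 2) > 0"
    using rsq_pos[of n l K] asq_pos[of n _ K] assms by auto
  then show ?thesis
    unfolding rratio_def c_def rsq_eq[of K n "Suc l"]
    by (simp add: rsq_weight_Suc_telescope field_simps)
qed

lemma rratio_pos: "1 \<le> n \<Longrightarrow> 2 * l + 2 \<le> K \<Longrightarrow> rratio K n l > 0"
  unfolding rratio_def using rsq_pos asq_pos by simp

lemma Bcoef_eq:
  "j \<le> m \<Longrightarrow> Bcoef K n m j = 1 + asq K n (2 * (m - j) + 1) / asq K n (2 * (m - j) + 2)"
proof -
  assume "j \<le> m"
  then have "2 * m + 1 - 2 * j = 2 * (m - j) + 1" "2 * m + 2 - 2 * j = 2 * (m - j) + 2"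
    by auto
  then show ?thesis
    unfolding Bcoef_def by presburger
qed

lemma Acoef_Suc_eq:
  "j \<le> m \<Longrightarrow> Acoef K n m (Suc j) = - asq K n (2 * (m - j) + 1) / asq K n (2 * (m - j) + 2)"
proof -
  assume "j \<le> m"
  then have "2 * m + 3 - 2 * Suc j = 2 * (m - j) + 1" "2 * m + 4 - 2 * Suc j = 2 * (m - j) + 2"
    by auto
  then show ?thesis
    unfolding Acoef_def by presburger
qed

theorem lemma1:
  fixes K m n :: nat
  assumes "n \<ge> 1" and "2 * m + 2 \<le> K"
  shows "rsq K n m / asq K n (2 * m + 2) = Rcal K n m m / Scal K n m m"
proof -
  have "rratio K n (m - 0) = Rcal K n m m / Scal K n m m"
    unfolding Rcal_def Scal_def
  proof (rule continued_fraction_eq_rec3_quotient)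
    fix j
    assume "j < m"
    then obtain l where "m - j = Suc l" "m - Suc j = l"
      by (metis Suc_diff_Suc)
    then show "rratio K n (m - j) = Bcoef K n m j + Acoef K n m (Suc j) / rratio K n (m - Suc j)"
      using rratio_Suc[of n l K] assms \<open>j < m\<close> by (simp add: Bcoef_eq Acoef_Suc_eq)
  next
    show "rratio K n (m - j) \<noteq> 0" if "j \<le> m" for j
      using rratio_pos[of n "m - j" K] assms that by fastforce
  next
    show "rratio K n (m - m) = Bcoef K n m m"
      using rratio_0[of n K] assms by (simp add: Bcoef_eq numeral_2_eq_2)
  qed
  then show ?thesis
    by (simp add: rratio_def)
qed

end
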